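(* Let $f_1,\dots,f_\Lambda$ be $\Lambda\ge2$ candidate models and let $\mathcal{A}$ be any deterministic pairwise comparison rule assigning to each pair $\{f,f'\}$ of distinct candidates one of them, $\mathcal{A}(f,f')\in\{f,f'\}$. Run the tournament procedure described in the context with $\mathcal{A}$. Then there are universal constants $0<c\le C$ such that the expected number of calls to $\mathcal{A}$ (expectation over the random pivot choices) lies between $c\Lambda$ and $C\Lambda$; i.e. it is $\Theta(\Lambda)$.
   Context: Tournament procedure (ATOMS): initialize $S=\{f_1,\dots,f_\Lambda\}$. While $|S|>1$: choose a pivot $f\in S$ uniformly at random (independently of the past); set $S'=\{f'\in S\setminus\{f\}:\mathcal{A}(f,f')=f'\}$ (this requires one call to $\mathcal{A}$ for each $f'\in S\setminus\{f\}$); if $S'=\emptyset$, output $f$ and stop; otherwise set $S\leftarrow S'$. If the loop ends with $|S|=1$, output the unique element of $S$. *)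

theory Defs
  imports "HOL-Probability.Probability"
begin

text \<open>Candidates f_1,...,f_Lambda are represented by their indices; the comparison rule
  is a function A on indices. One round of the tournament with current set S and pivot f
  keeps the candidates f' in S - {f} with A f f' = f'.\<close>

definition survivors :: "(nat \<Rightarrow> nat \<Rightarrow> nat) \<Rightarrow> nat set \<Rightarrow> nat \<Rightarrow> nat set" where
  "survivors A S f = {f' \<in> S - {f}. A f f' = f'}"

function tournament_calls :: "(nat \<Rightarrow> nat \<Rightarrow> nat) \<Rightarrow> nat set \<Rightarrow> nat pmf" where
  "tournament_calls A S =
     (if \<not> finite S \<or> card S \<le> 1 then return_pmf 0
      else pmf_of_set S \<bind> (\<lambda>f.
        if survivors A S f = {} then return_pmf (card S - 1)
        else map_pmf (\<lambda>k. (card S - 1) + k) (tournament_calls A (survivors A S f))))"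
  by auto
termination
proof (relation "Wellfounded.measure (\<lambda>(A, S). card S)")
  show "wf (Wellfounded.measure (\<lambda>(A, S). card S))" by simp
next
  fix A :: "nat \<Rightarrow> nat \<Rightarrow> nat" and S :: "nat set" and f
  assume h: "\<not> (\<not> finite S \<or> card S \<le> 1)" "f \<in> set_pmf (pmf_of_set S)"
  then have "finite S" "S \<noteq> {}" by auto
  with h have "f \<in> S" by simp
  have "survivors A S f \<subset> S" using \<open>f \<in> S\<close> unfolding survivors_def by auto
  then show "((A, survivors A S f), A, S) \<in> Wellfounded.measure (\<lambda>(A, S). card S)"
    using \<open>finite S\<close> by (simp add: psubset_card_mono)
qed

definition expected_calls :: "(nat \<Rightarrow> nat \<Rightarrow> nat) \<Rightarrow> nat \<Rightarrow> real" where
  "expected_calls A \<Lambda> = measure_pmf.expectation (tournament_calls A {0..<\<Lambda>}) real"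

end

theory Submission
  imports Defs
begin

text \<open>Each round with current set \<open>S\<close> costs \<open>|S| - 1\<close> calls, which already gives the lower
  bound \<open>\<Lambda> - 1\<close>. For the upper bound, the survivor sets \<open>S\<^sub>f\<close> of the possible pivots
  \<open>f \<in> S\<close> satisfy \<open>f' \<in> S\<^sub>f \<Longrightarrow> f \<notin> S\<^sub>f\<^sub>'\<close>, so the pairs \<open>(f, f')\<close> with \<open>f' \<in> S\<^sub>f\<close> form
  an antisymmetric relation on \<open>S\<close> and \<open>\<Sum>\<^sub>f |S\<^sub>f| \<le> |S|\<^sup>2 / 2\<close>: a uniform pivot halves the
  set on average. By induction the expected cost from \<open>S\<close> is then at most
  \<open>(|S| - 1) + (2 / |S|) \<Sum>\<^sub>f |S\<^sub>f| \<le> 2 |S|\<close>.\<close>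

definition comparison_rule_on :: "nat set \<Rightarrow> (nat \<Rightarrow> nat \<Rightarrow> nat) \<Rightarrow> bool" where
  "comparison_rule_on S A \<longleftrightarrow>
     (\<forall>i\<in>S. \<forall>j\<in>S. i \<noteq> j \<longrightarrow> A i j \<in> {i, j} \<and> A i j = A j i)"

abbreviation expected_calls_from :: "(nat \<Rightarrow> nat \<Rightarrow> nat) \<Rightarrow> nat set \<Rightarrow> real" where
  "expected_calls_from A S \<equiv> measure_pmf.expectation (tournament_calls A S) real"

lemma card_le_half_square_if_asym:
  assumes "finite S" "R \<subseteq> S \<times> S" "R \<inter> R\<inverse> = {}"
  shows "2 * card R \<le> card S * card S"
proof -
  have fin: "finite R" "finite (R\<inverse>)"
    using assms(1,2) by (auto intro: finite_subset[of _ "S \<times> S"])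
  have "2 * card R = card R + card (R\<inverse>)" by simp
  also have "\<dots> = card (R \<union> R\<inverse>)" using fin assms(3) by (simp add: card_Un_disjoint)
  also have "\<dots> \<le> card (S \<times> S)" using assms(1,2) by (intro card_mono) auto
  finally show ?thesis by (simp add: card_cartesian_product)
qed

lemma survivors_subset: "survivors A S f \<subseteq> S - {f}"
  unfolding survivors_def by auto

lemma sum_card_survivors_le:
  assumes "finite S" "comparison_rule_on S A"
  shows "2 * (\<Sum>f\<in>S. card (survivors A S f)) \<le> card S * card S"
proof -
  let ?R = "Sigma S (survivors A S)"
  have "finite (survivors A S f)" for f
    by (rule finite_subset[OF _ assms(1)]) (use survivors_subset in blast)
  then have "card ?R = (\<Sum>f\<in>S. card (survivors A S f))"
    using assms(1) by (simp add: card_SigmaI)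
  moreover have "?R \<inter> ?R\<inverse> = {}"
    using assms(2) unfolding comparison_rule_on_def survivors_def by auto
  moreover have "?R \<subseteq> S \<times> S" using survivors_subset by blast
  ultimately show ?thesis using card_le_half_square_if_asym assms(1) by metis
qed

declare tournament_calls.simps[simp del]

lemma tournament_calls_trivial: "card S \<le> 1 \<Longrightarrow> tournament_calls A S = return_pmf 0"
  by (simp add: tournament_calls.simps)

text \<open>Since the procedure started from \<open>{}\<close> makes no calls, the case of an empty
  survivor set needs no special treatment.\<close>

lemma tournament_calls_step:
  assumes "finite S" "2 \<le> card S"
  shows "tournament_calls A S = pmf_of_set S \<bind>
           (\<lambda>f. map_pmf (\<lambda>k. (card S - 1) + k) (tournament_calls A (survivors A S f)))"
  using assms by (subst tournament_calls.simps) (auto intro!: bind_pmf_cong simp: tournament_calls_trivial)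

lemma finite_set_pmf_tournament_calls: "finite (set_pmf (tournament_calls A S))"
proof (induction A S rule: tournament_calls.induct)
  case (1 A S)
  show ?case
  proof (cases "finite S \<and> 2 \<le> card S")
    case True
    have S: "S \<noteq> {}" using True by auto
    have "finite (set_pmf (tournament_calls A (survivors A S f)))" if "f \<in> S" for f
      using 1 True S that by (cases "survivors A S f = {}") (auto simp: tournament_calls_trivial)
    with S show ?thesis using True by (simp add: tournament_calls_step set_bind_pmf)
  next
    case False
    then show ?thesis by (subst tournament_calls.simps) auto
  qed
qed

lemma expected_calls_from_step:
  assumes "finite S" "2 \<le> card S"
  shows "expected_calls_from A S =
           real (card S - 1) + (\<Sum>f\<in>S. expected_calls_from A (survivors A S f)) / real (card S)"
proof -
  have S: "S \<noteq> {}" using assms by auto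
  have "expected_calls_from A S = (\<Sum>f\<in>S. measure_pmf.expectation
          (map_pmf (\<lambda>k. (card S - 1) + k) (tournament_calls A (survivors A S f))) real
          /\<^sub>R real (card S))"
    unfolding tournament_calls_step[OF assms]
    by (rule pmf_expectation_bind_pmf_of_set)
       (use S assms finite_set_pmf_tournament_calls in auto)
  also have "\<dots> = (\<Sum>f\<in>S. (real (card S - 1) + expected_calls_from A (survivors A S f))
                    / real (card S))"
    by (simp add: integrable_measure_pmf_finite[OF finite_set_pmf_tournament_calls]
                  divide_inverse_commute)
  also have "\<dots> = real (card S - 1) + (\<Sum>f\<in>S. expected_calls_from A (survivors A S f)) / real (card S)"
    using S assms(1) by (simp add: add_divide_distrib sum.distrib sum_divide_distrib[symmetric])
  finally show ?thesis .
qed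

lemma expected_calls_from_ge:
  assumes "finite S" "2 \<le> card S"
  shows "real (card S - 1) \<le> expected_calls_from A S"
  unfolding expected_calls_from_step[OF assms]
  by (intro add_increasing2 divide_nonneg_nonneg sum_nonneg) auto

lemma expected_calls_from_le:
  assumes "finite S" "comparison_rule_on S A"
  shows "expected_calls_from A S \<le> 2 * real (card S)"
  using assms
proof (induction S rule: finite_psubset_induct)
  case (psubset S)
  show ?case
  proof (cases "card S \<le> 1")
    case True
    then show ?thesis by (simp add: tournament_calls_trivial)
  next
    case False
    let ?n = "real (card S)"
    have IH: "expected_calls_from A (survivors A S f) \<le> 2 * real (card (survivors A S f))"
      if "f \<in> S" for f
    proof (rule psubset.IH)
      show "survivors A S f \<subset> S" using survivors_subset that by blast
      then show "comparison_rule_on (survivors A S f) A"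
        using psubset.prems unfolding comparison_rule_on_def by blast
    qed
    have "(\<Sum>f\<in>S. expected_calls_from A (survivors A S f))
            \<le> 2 * real (\<Sum>f\<in>S. card (survivors A S f))"
      using IH by (simp add: sum_distrib_left sum_mono)
    also have "\<dots> \<le> ?n * ?n"
      using sum_card_survivors_le[OF psubset.hyps psubset.prems] by (metis of_nat_le_iff of_nat_mult of_nat_numeral)
    finally have "(\<Sum>f\<in>S. expected_calls_from A (survivors A S f)) / ?n \<le> ?n"
      using False by (simp add: divide_le_eq)
    then show ?thesis
      using expected_calls_from_step[OF psubset.hyps] False by simp
  qed
qed

theorem mainTheorem2:
  "\<exists>c C :: real. 0 < c \<and> c \<le> C \<and>
     (\<forall>(\<Lambda>::nat) (A :: nat \<Rightarrow> nat \<Rightarrow> nat).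
        \<Lambda> \<ge> 2 \<longrightarrow>
        (\<forall>i\<in>{0..<\<Lambda>}. \<forall>j\<in>{0..<\<Lambda>}. i \<noteq> j \<longrightarrow> A i j \<in> {i, j} \<and> A i j = A j i) \<longrightarrow>
        c * real \<Lambda> \<le> expected_calls A \<Lambda> \<and> expected_calls A \<Lambda> \<le> C * real \<Lambda>)"
proof (rule exI[of _ "1/2"], rule exI[of _ 2], intro conjI allI impI)
  fix L :: nat and A :: "nat \<Rightarrow> nat \<Rightarrow> nat"
  assume L: "L \<ge> 2"
    and rule: "\<forall>i\<in>{0..<L}. \<forall>j\<in>{0..<L}. i \<noteq> j \<longrightarrow> A i j \<in> {i, j} \<and> A i j = A j i"
  have "real L - 1 \<le> expected_calls A L"
    using expected_calls_from_ge[of "{0..<L}" A] L unfolding expected_calls_def by (simp add: of_nat_diff)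
  then show "1/2 * real L \<le> expected_calls A L" using L by linarith
  show "expected_calls A L \<le> 2 * real L"
    using expected_calls_from_le[of "{0..<L}" A] rule
    unfolding expected_calls_def comparison_rule_on_def by simp
qed simp_all

end
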